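(* Let $X$ be a compact Hausdorff space. Then $\mathscr{C}_{\mathrm{a.e.}}(X)$ and all its subrings are strongly localizable archimedean partially ordered commutative rings.
   Context: $\mathscr{C}_{\mathrm{a.e.}}(X)$: consider continuous real-valued functions $f$ defined on dense open subsets $\operatorname{dom}f$ of $X$; define $f+g$, $fg$ pointwise on $\operatorname{dom}f\cap\operatorname{dom}g$; $f\approx g$ iff $f|_A=g|_A$ for some dense open $A\subseteq\operatorname{dom}f\cap\operatorname{dom}g$. $\mathscr{C}_{\mathrm{a.e.}}(X)$ is the quotient commutative ring, ordered by $[f]\le[g]$ iff $f|_A\le g|_A$ pointwise for some dense open $A\subseteq\operatorname{dom}f\cap\operatorname{dom}g$. Subrings contain $1$ and carry the induced order. A partially ordered commutative ring is a commutative ring with partial order $\le$, $r\le s\Rightarrow r+t\le s+t$, positive cone $R^+$ closed under multiplication and containing all squares. $\mathbb{N}=\{1,2,\dots\}$. Archimedean: $kg+h\in R^+$ for all $k\in\mathbb{N}$ implies $g\in R^+$. $\mathrm{Loc}(R)$: the $s\in1+R^+$ with $rs\in R^+\Rightarrow r\in R^+$ for all $r$. Strongly localizable: $r^2\in R^+$ for all $r$ and $\mathrm{Loc}(R)=1+R^+$. *)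

theory Defs
  imports "HOL-Analysis.Analysis" "HOL-Algebra.Algebra"
begin

record 'a ordered_ring = "'a ring" + ole :: "'a \<Rightarrow> 'a \<Rightarrow> bool"

definition pos_cone :: "('a, 'b) ordered_ring_scheme \<Rightarrow> 'a set" where
  "pos_cone R = {r \<in> carrier R. ole R (\<zero>\<^bsub>R\<^esub>) r}"

definition po_cring :: "('a, 'b) ordered_ring_scheme \<Rightarrow> bool" where
  "po_cring R \<longleftrightarrow> cring R
    \<and> (\<forall>r\<in>carrier R. ole R r r)
    \<and> (\<forall>r\<in>carrier R. \<forall>s\<in>carrier R. ole R r s \<and> ole R s r \<longrightarrow> r = s)
    \<and> (\<forall>r\<in>carrier R. \<forall>s\<in>carrier R. \<forall>t\<in>carrier R. ole R r s \<and> ole R s t \<longrightarrow> ole R r t)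
    \<and> (\<forall>r\<in>carrier R. \<forall>s\<in>carrier R. \<forall>t\<in>carrier R.
          ole R r s \<longrightarrow> ole R (add R r t) (add R s t))
    \<and> (\<forall>r\<in>pos_cone R. \<forall>s\<in>pos_cone R. mult R r s \<in> pos_cone R)
    \<and> (\<forall>r\<in>carrier R. mult R r r \<in> pos_cone R)"

definition archimedean_po :: "('a, 'b) ordered_ring_scheme \<Rightarrow> bool" where
  "archimedean_po R \<longleftrightarrow>
    (\<forall>g\<in>carrier R. \<forall>h\<in>carrier R.
       (\<forall>k::nat. k \<ge> 1 \<longrightarrow> add R (add_pow R k g) h \<in> pos_cone R) \<longrightarrow> g \<in> pos_cone R)"

definition Loc :: "('a, 'b) ordered_ring_scheme \<Rightarrow> 'a set" where
  "Loc R = {s. (\<exists>p\<in>pos_cone R. s = add R (\<one>\<^bsub>R\<^esub>) p)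
              \<and> (\<forall>r\<in>carrier R. mult R r s \<in> pos_cone R \<longrightarrow> r \<in> pos_cone R)}"

definition strongly_localizable :: "('a, 'b) ordered_ring_scheme \<Rightarrow> bool" where
  "strongly_localizable R \<longleftrightarrow>
    (\<forall>r\<in>carrier R. mult R r r \<in> pos_cone R)
    \<and> Loc R = (\<lambda>p. add R (\<one>\<^bsub>R\<^esub>) p) ` pos_cone R"

text \<open>A representative is a pair (A, f): A a dense open subset of T and f continuous on A
  (values of f outside A are irrelevant).\<close>

type_synonym 'a cae_rep = "'a set \<times> ('a \<Rightarrow> real)"

definition dense_open :: "'a topology \<Rightarrow> 'a set \<Rightarrow> bool" where
  "dense_open T A \<longleftrightarrow> openin T A \<and> T closure_of A = topspace T"

definition cae_valid :: "'a topology \<Rightarrow> 'a cae_rep \<Rightarrow> bool" where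
  "cae_valid T p \<longleftrightarrow> dense_open T (fst p)
     \<and> continuous_map (subtopology T (fst p)) euclideanreal (snd p)"

definition cae_eq :: "'a topology \<Rightarrow> 'a cae_rep \<Rightarrow> 'a cae_rep \<Rightarrow> bool" where
  "cae_eq T p q \<longleftrightarrow> (\<exists>D. dense_open T D \<and> D \<subseteq> fst p \<inter> fst q
                        \<and> (\<forall>x\<in>D. snd p x = snd q x))"

definition cae_class :: "'a topology \<Rightarrow> 'a cae_rep \<Rightarrow> 'a cae_rep set" where
  "cae_class T p = {q. cae_valid T q \<and> cae_eq T p q}"

definition rep_add :: "'a cae_rep \<Rightarrow> 'a cae_rep \<Rightarrow> 'a cae_rep" where
  "rep_add p q = (fst p \<inter> fst q, \<lambda>x. snd p x + snd q x)"

definition rep_mult :: "'a cae_rep \<Rightarrow> 'a cae_rep \<Rightarrow> 'a cae_rep" where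
  "rep_mult p q = (fst p \<inter> fst q, \<lambda>x. snd p x * snd q x)"

definition Cae :: "'a topology \<Rightarrow> ('a cae_rep set) ordered_ring" where
  "Cae T = ordered_ring.make
     {cae_class T p | p. cae_valid T p}
     (\<lambda>C E. \<Union>{cae_class T (rep_mult p q) | p q. p \<in> C \<and> q \<in> E})
     (cae_class T (topspace T, \<lambda>_. 1))
     (cae_class T (topspace T, \<lambda>_. 0))
     (\<lambda>C E. \<Union>{cae_class T (rep_add p q) | p q. p \<in> C \<and> q \<in> E})
     (\<lambda>C E. \<exists>p\<in>C. \<exists>q\<in>E. \<exists>D. dense_open T D \<and> D \<subseteq> fst p \<inter> fst q
                      \<and> (\<forall>x\<in>D. snd p x \<le> snd q x))"

end

theory Submission
  imports Defs
begin

text \<open>Two continuous functions on dense open sets that agree, or are ordered, on some dense open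
  set agree, or are ordered, wherever both are defined, because the set where the relation fails
  is open. Hence equality, sums, products and the order of \<open>C\<^sub>a\<^sub>e(X)\<close> can be
  computed pointwise on representatives, and every axiom reduces to a fact about real numbers:
  \<open>k g + h \<ge> 0\<close> for all \<open>k\<close> forces \<open>g \<ge> 0\<close>, and \<open>r (1 + p) \<ge> 0\<close> with \<open>p \<ge> 0\<close> forces
  \<open>r \<ge> 0\<close>. All three properties pass to subrings with the induced order: an element
  \<open>1 + p\<close> of a subring lies in \<open>Loc\<close> of the big ring, so it cancels in the subring as well.\<close>

lemma pos_cone_carrier_update:
  "S \<subseteq> carrier R \<Longrightarrow> pos_cone (R\<lparr>carrier := S\<rparr>) = pos_cone R \<inter> S"
  by (auto simp: pos_cone_def)

lemma add_pow_carrier_update [simp]: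
  "add_pow (R\<lparr>carrier := S\<rparr>) (k::nat) x = add_pow R k x"
  by (simp add: add_pow_def nat_pow_def)

lemma strongly_localizable_iff:
  "strongly_localizable R \<longleftrightarrow> (\<forall>r\<in>carrier R. r \<otimes>\<^bsub>R\<^esub> r \<in> pos_cone R)
    \<and> (\<forall>p\<in>pos_cone R. \<forall>r\<in>carrier R.
         r \<otimes>\<^bsub>R\<^esub> (\<one>\<^bsub>R\<^esub> \<oplus>\<^bsub>R\<^esub> p) \<in> pos_cone R \<longrightarrow> r \<in> pos_cone R)"
  unfolding strongly_localizable_def Loc_def by blast

lemma po_cring_subring:
  assumes R: "po_cring R" and S: "subring S R"
  shows "po_cring (R\<lparr>carrier := S\<rparr>)"
proof -
  have sub: "S \<subseteq> carrier R" using subringE(1)[OF S] .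
  have "cring R" using R by (simp add: po_cring_def)
  then have "cring (R\<lparr>carrier := S\<rparr>)"
    using cring.subcringI'[OF _ S] ring.subcring_iff[OF cring.axioms(1) sub] by blast
  moreover have "r \<otimes>\<^bsub>R\<^esub> s \<in> S" if "r \<in> S" "s \<in> S" for r s
    using subringE(6)[OF S] that by blast
  ultimately show ?thesis
    using R sub unfolding po_cring_def pos_cone_carrier_update[OF sub]
    by (simp add: subset_iff Ball_def) (meson IntI)
qed

lemma archimedean_po_subring:
  assumes "archimedean_po R" and "S \<subseteq> carrier R"
  shows "archimedean_po (R\<lparr>carrier := S\<rparr>)"
  using assms unfolding archimedean_po_def pos_cone_carrier_update[OF assms(2)] by auto

lemma strongly_localizable_subring:
  assumes R: "strongly_localizable R" and S: "subring S R"
  shows "strongly_localizable (R\<lparr>carrier := S\<rparr>)"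
proof -
  have sub: "S \<subseteq> carrier R" using subringE(1)[OF S] .
  have "r \<otimes>\<^bsub>R\<^esub> s \<in> S" "r \<oplus>\<^bsub>R\<^esub> s \<in> S" if "r \<in> S" "s \<in> S" for r s
    using subringE(6,7)[OF S] that by blast+
  then show ?thesis
    using R sub subringE(3)[OF S] unfolding strongly_localizable_iff pos_cone_carrier_update[OF sub]
    by (simp add: subset_iff Ball_def) (meson IntI)
qed

lemma dense_open_Int: "dense_open T A \<Longrightarrow> dense_open T B \<Longrightarrow> dense_open T (A \<inter> B)"
  unfolding dense_open_def dense_intersects_open
  by (metis inf_assoc inf_commute openin_Int)

lemma dense_open_topspace: "dense_open T (topspace T)"
  by (simp add: dense_open_def)

lemma continuous_map_le_if_le_on_dense:
  assumes U: "openin T U"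
    and f: "continuous_map (subtopology T U) euclideanreal f"
    and g: "continuous_map (subtopology T U) euclideanreal g"
    and D: "T closure_of D = topspace T" and le: "\<And>y. y \<in> D \<inter> U \<Longrightarrow> f y \<le> g y"
    and x: "x \<in> U"
  shows "f x \<le> g x"
proof (rule ccontr)
  define V where "V = {y \<in> topspace (subtopology T U). f y - g y \<in> {0<..}}"
  have "openin (subtopology T U) V"
    unfolding V_def by (rule openin_continuous_map_preimage[OF continuous_map_diff[OF f g]]) simp
  then have "openin T V" using U openin_trans_full by blast
  moreover assume "\<not> f x \<le> g x"
  then have "x \<in> V" using x U openin_subset by (fastforce simp: V_def)
  ultimately have "D \<inter> V \<noteq> {}" using D unfolding dense_intersects_open by blast
  then show False using le by (auto simp: V_def dest: leD)
qed

lemma cae_valid_subset: "cae_valid T p \<Longrightarrow> fst p \<subseteq> topspace T"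
  by (simp add: cae_valid_def dense_open_def openin_subset)

lemma cae_valid_const: "cae_valid T (topspace T, \<lambda>_. c)"
  by (simp add: cae_valid_def dense_open_topspace)

lemma cae_valid_rep_add: "cae_valid T p \<Longrightarrow> cae_valid T q \<Longrightarrow> cae_valid T (rep_add p q)"
  unfolding cae_valid_def rep_add_def
  by (auto intro!: dense_open_Int continuous_map_add elim: continuous_map_from_subtopology_mono)

lemma cae_valid_rep_mult: "cae_valid T p \<Longrightarrow> cae_valid T q \<Longrightarrow> cae_valid T (rep_mult p q)"
  unfolding cae_valid_def rep_mult_def
  by (auto intro!: dense_open_Int continuous_map_real_mult
      elim: continuous_map_from_subtopology_mono)

lemma cae_valid_uminus: "cae_valid T p \<Longrightarrow> cae_valid T (fst p, \<lambda>x. - snd p x)"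
  unfolding cae_valid_def by (auto intro!: continuous_map_minus)

lemma cae_valid_scale: "cae_valid T p \<Longrightarrow> cae_valid T (fst p, \<lambda>x. c * snd p x)"
  unfolding cae_valid_def by (auto intro!: continuous_map_real_mult)

lemma fst_rep_add [simp]: "fst (rep_add p q) = fst p \<inter> fst q"
  and snd_rep_add [simp]: "snd (rep_add p q) x = snd p x + snd q x"
  and fst_rep_mult [simp]: "fst (rep_mult p q) = fst p \<inter> fst q"
  and snd_rep_mult [simp]: "snd (rep_mult p q) x = snd p x * snd q x"
  by (simp_all add: rep_add_def rep_mult_def)

definition cae_le :: "'a topology \<Rightarrow> 'a cae_rep \<Rightarrow> 'a cae_rep \<Rightarrow> bool" where
  "cae_le T p q \<longleftrightarrow> (\<exists>D. dense_open T D \<and> D \<subseteq> fst p \<inter> fst q \<and> (\<forall>x\<in>D. snd p x \<le> snd q x))"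

lemma cae_leI:
  assumes "cae_valid T p" "cae_valid T q" "dense_open T D"
    and "\<And>x. x \<in> D \<inter> fst p \<inter> fst q \<Longrightarrow> snd p x \<le> snd q x"
  shows "cae_le T p q"
  unfolding cae_le_def using assms
  by (intro exI[of _ "D \<inter> fst p \<inter> fst q"]) (auto simp: cae_valid_def dense_open_Int)

lemma cae_le_iff:
  assumes p: "cae_valid T p" and q: "cae_valid T q"
  shows "cae_le T p q \<longleftrightarrow> (\<forall>x\<in>fst p \<inter> fst q. snd p x \<le> snd q x)"
proof
  assume "cae_le T p q"
  then obtain D where D: "dense_open T D" "D \<subseteq> fst p \<inter> fst q" "\<forall>x\<in>D. snd p x \<le> snd q x"
    unfolding cae_le_def by blast
  have U: "openin T (fst p \<inter> fst q)" using p q by (auto simp: cae_valid_def dense_open_def)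
  have "continuous_map (subtopology T (fst p \<inter> fst q)) euclideanreal (snd p)"
    "continuous_map (subtopology T (fst p \<inter> fst q)) euclideanreal (snd q)"
    using p q unfolding cae_valid_def
    by (blast intro: continuous_map_from_subtopology_mono[OF _ Int_lower1]
        continuous_map_from_subtopology_mono[OF _ Int_lower2])+
  moreover have "T closure_of D = topspace T" using D(1) by (simp add: dense_open_def)
  ultimately show "\<forall>x\<in>fst p \<inter> fst q. snd p x \<le> snd q x"
    using continuous_map_le_if_le_on_dense[OF U] D(3) by blast
next
  assume "\<forall>x\<in>fst p \<inter> fst q. snd p x \<le> snd q x"
  then show "cae_le T p q" using p q dense_open_topspace by (intro cae_leI) auto
qed

lemma cae_eq_iff:
  assumes p: "cae_valid T p" and q: "cae_valid T q"
  shows "cae_eq T p q \<longleftrightarrow> (\<forall>x\<in>fst p \<inter> fst q. snd p x = snd q x)"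
proof
  assume "cae_eq T p q"
  then have "cae_le T p q" "cae_le T q p" unfolding cae_eq_def cae_le_def by force+
  then show "\<forall>x\<in>fst p \<inter> fst q. snd p x = snd q x"
    using cae_le_iff[OF p q] cae_le_iff[OF q p] by (auto intro: order_antisym)
next
  assume "\<forall>x\<in>fst p \<inter> fst q. snd p x = snd q x"
  then show "cae_eq T p q" unfolding cae_eq_def
    using p q by (intro exI[of _ "fst p \<inter> fst q"]) (auto simp: cae_valid_def dense_open_Int)
qed

text \<open>Transitivity is where density is needed: two representatives agreeing with a third
  agree on the dense open set where all three are defined, hence wherever both are defined.\<close>

lemma cae_eq_trans:
  assumes p: "cae_valid T p" and q: "cae_valid T q" and r: "cae_valid T r"
    and "cae_eq T p q" "cae_eq T q r"
  shows "cae_eq T p r"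
  unfolding cae_eq_def using assms cae_eq_iff[OF p q] cae_eq_iff[OF q r]
  by (intro exI[of _ "fst p \<inter> fst q \<inter> fst r"]) (auto simp: cae_valid_def dense_open_Int)

lemma cae_class_eq_iff:
  assumes p: "cae_valid T p" and q: "cae_valid T q"
  shows "cae_class T p = cae_class T q \<longleftrightarrow> (\<forall>x\<in>fst p \<inter> fst q. snd p x = snd q x)"
proof -
  have "cae_eq T p q \<longleftrightarrow> cae_eq T q p" using cae_eq_iff[OF p q] cae_eq_iff[OF q p] by auto
  then have "cae_class T p = cae_class T q \<longleftrightarrow> cae_eq T p q"
    using cae_eq_trans[OF p q] cae_eq_trans[OF q p] cae_eq_iff[OF q q] q
    unfolding cae_class_def by blast
  with cae_eq_iff[OF p q] show ?thesis by simp
qed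

lemma mem_cae_class: "q \<in> cae_class T p \<longleftrightarrow> cae_valid T q \<and> cae_eq T p q"
  by (simp add: cae_class_def)

lemma cae_class_self: "cae_valid T p \<Longrightarrow> p \<in> cae_class T p"
  by (simp add: mem_cae_class cae_eq_iff)

lemma carrier_Cae: "carrier (Cae T) = {cae_class T p | p. cae_valid T p}"
  and zero_Cae: "\<zero>\<^bsub>Cae T\<^esub> = cae_class T (topspace T, \<lambda>_. 0)"
  and one_Cae: "\<one>\<^bsub>Cae T\<^esub> = cae_class T (topspace T, \<lambda>_. 1)"
  by (simp_all add: Cae_def ordered_ring.defs)

lemma ole_Cae: "ole (Cae T) C E \<longleftrightarrow> (\<exists>p\<in>C. \<exists>q\<in>E. cae_le T p q)"
  by (simp add: Cae_def ordered_ring.defs cae_le_def)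

lemma Cae_carrierE:
  assumes "C \<in> carrier (Cae T)"
  obtains p where "cae_valid T p" "C = cae_class T p"
  using assms unfolding carrier_Cae by blast

lemma cae_class_in_carrier: "cae_valid T p \<Longrightarrow> cae_class T p \<in> carrier (Cae T)"
  unfolding carrier_Cae by blast

text \<open>The ring operations of \<^const>\<open>Cae\<close> are defined as the union over all pairs of
  representatives; for a pointwise operation all these pairs yield the same class.\<close>

lemma Union_cae_class_pointwise:
  assumes p: "cae_valid T p" and q: "cae_valid T q"
    and F: "\<And>p q. cae_valid T p \<Longrightarrow> cae_valid T q
              \<Longrightarrow> cae_valid T (fst p \<inter> fst q, \<lambda>x. F (snd p x) (snd q x))"
  shows "\<Union>{cae_class T (fst p' \<inter> fst q', \<lambda>x. F (snd p' x) (snd q' x)) | p' q'.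
            p' \<in> cae_class T p \<and> q' \<in> cae_class T q}
       = cae_class T (fst p \<inter> fst q, \<lambda>x. F (snd p x) (snd q x))"
proof -
  have "cae_class T (fst p' \<inter> fst q', \<lambda>x. F (snd p' x) (snd q' x))
      = cae_class T (fst p \<inter> fst q, \<lambda>x. F (snd p x) (snd q x))"
    if "p' \<in> cae_class T p" "q' \<in> cae_class T q" for p' q'
  proof -
    have p': "cae_valid T p'" and q': "cae_valid T q'"
      and "\<forall>x\<in>fst p \<inter> fst p'. snd p x = snd p' x" "\<forall>x\<in>fst q \<inter> fst q'. snd q x = snd q' x"
      using that p q by (auto simp: mem_cae_class cae_eq_iff)
    then show ?thesis by (subst cae_class_eq_iff) (auto intro: F p q)
  qed
  then show ?thesis using cae_class_self[OF p] cae_class_self[OF q] by blast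
qed

lemma add_Cae_class:
  assumes "cae_valid T p" "cae_valid T q"
  shows "cae_class T p \<oplus>\<^bsub>Cae T\<^esub> cae_class T q = cae_class T (rep_add p q)"
proof -
  have "cae_class T p \<oplus>\<^bsub>Cae T\<^esub> cae_class T q
      = \<Union>{cae_class T (rep_add p' q') | p' q'. p' \<in> cae_class T p \<and> q' \<in> cae_class T q}"
    by (simp add: Cae_def ordered_ring.defs)
  also have "\<dots> = cae_class T (rep_add p q)"
    unfolding rep_add_def
    by (rule Union_cae_class_pointwise[OF assms]) (metis cae_valid_rep_add rep_add_def)
  finally show ?thesis .
qed

lemma mult_Cae_class:
  assumes "cae_valid T p" "cae_valid T q"
  shows "cae_class T p \<otimes>\<^bsub>Cae T\<^esub> cae_class T q = cae_class T (rep_mult p q)"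
proof -
  have "cae_class T p \<otimes>\<^bsub>Cae T\<^esub> cae_class T q
      = \<Union>{cae_class T (rep_mult p' q') | p' q'. p' \<in> cae_class T p \<and> q' \<in> cae_class T q}"
    by (simp add: Cae_def ordered_ring.defs)
  also have "\<dots> = cae_class T (rep_mult p q)"
    unfolding rep_mult_def
    by (rule Union_cae_class_pointwise[OF assms]) (metis cae_valid_rep_mult rep_mult_def)
  finally show ?thesis .
qed

lemma ole_Cae_class:
  assumes p: "cae_valid T p" and q: "cae_valid T q"
  shows "ole (Cae T) (cae_class T p) (cae_class T q) \<longleftrightarrow> (\<forall>x\<in>fst p \<inter> fst q. snd p x \<le> snd q x)"
proof
  assume "ole (Cae T) (cae_class T p) (cae_class T q)"
  then obtain p' q' where "p' \<in> cae_class T p" "q' \<in> cae_class T q" "cae_le T p' q'"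
    unfolding ole_Cae by blast
  then have p': "cae_valid T p'" and q': "cae_valid T q'"
    and "\<forall>x\<in>fst p \<inter> fst p'. snd p x = snd p' x" "\<forall>x\<in>fst q \<inter> fst q'. snd q x = snd q' x"
    and "\<forall>x\<in>fst p' \<inter> fst q'. snd p' x \<le> snd q' x"
    using p q by (auto simp: mem_cae_class cae_eq_iff cae_le_iff)
  then have "cae_le T p q"
    using p q by (intro cae_leI[where D = "fst p' \<inter> fst q'"]) (auto simp: cae_valid_def dense_open_Int)
  then show "\<forall>x\<in>fst p \<inter> fst q. snd p x \<le> snd q x" using cae_le_iff[OF p q] by blast
next
  assume "\<forall>x\<in>fst p \<inter> fst q. snd p x \<le> snd q x"
  then have "cae_le T p q" using cae_le_iff[OF p q] by blast
  then show "ole (Cae T) (cae_class T p) (cae_class T q)"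
    using cae_class_self[OF p] cae_class_self[OF q] unfolding ole_Cae by blast
qed

lemma zero_le_Cae_class:
  "cae_valid T p \<Longrightarrow> ole (Cae T) \<zero>\<^bsub>Cae T\<^esub> (cae_class T p) \<longleftrightarrow> (\<forall>x\<in>fst p. 0 \<le> snd p x)"
  unfolding zero_Cae by (subst ole_Cae_class) (auto simp: cae_valid_const dest: cae_valid_subset)

lemmas Cae_class_simps = add_Cae_class mult_Cae_class cae_class_eq_iff
  cae_valid_rep_add cae_valid_rep_mult cae_valid_const cae_valid_uminus zero_Cae one_Cae

lemma cring_Cae: "cring (Cae T)"
proof (rule cringI)
  show "abelian_group (Cae T)"
  proof (rule abelian_groupI)
    fix x assume "x \<in> carrier (Cae T)"
    then obtain p where p: "cae_valid T p" "x = cae_class T p" by (rule Cae_carrierE)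
    then have "cae_class T (fst p, \<lambda>x. - snd p x) \<oplus>\<^bsub>Cae T\<^esub> x = \<zero>\<^bsub>Cae T\<^esub>"
      by (simp add: Cae_class_simps)
    then show "\<exists>y\<in>carrier (Cae T). y \<oplus>\<^bsub>Cae T\<^esub> x = \<zero>\<^bsub>Cae T\<^esub>"
      using cae_class_in_carrier[OF cae_valid_uminus[OF p(1)]] by blast
  qed ((elim Cae_carrierE)?; simp add: Cae_class_simps cae_class_in_carrier)+
next
  show "comm_monoid (Cae T)"
    by (rule comm_monoidI; (elim Cae_carrierE)?; simp add: Cae_class_simps cae_class_in_carrier)
qed (elim Cae_carrierE; simp add: Cae_class_simps distrib_right)

lemma ole_Cae_classI:
  assumes p: "cae_valid T p" and q: "cae_valid T q" and D: "dense_open T D"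
    and le: "\<And>x. x \<in> D \<inter> fst p \<inter> fst q \<Longrightarrow> snd p x \<le> snd q x"
  shows "ole (Cae T) (cae_class T p) (cae_class T q)"
  using cae_leI[OF p q D le] cae_le_iff[OF p q] ole_Cae_class[OF p q] by blast

lemma zero_le_Cae_classI:
  assumes p: "cae_valid T p" and D: "dense_open T D" and le: "\<And>x. x \<in> D \<inter> fst p \<Longrightarrow> 0 \<le> snd p x"
  shows "ole (Cae T) \<zero>\<^bsub>Cae T\<^esub> (cae_class T p)"
  unfolding zero_Cae using le by (intro ole_Cae_classI[OF cae_valid_const p D]) auto

lemma ole_Cae_trans:
  assumes "r \<in> carrier (Cae T)" "s \<in> carrier (Cae T)" "t \<in> carrier (Cae T)"
    and "ole (Cae T) r s" "ole (Cae T) s t"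
  shows "ole (Cae T) r t"
proof -
  obtain p q u where pqu: "cae_valid T p" "cae_valid T q" "cae_valid T u"
    and rsu: "r = cae_class T p" "s = cae_class T q" "t = cae_class T u"
    using assms(1-3) by (meson Cae_carrierE)
  have "\<forall>x\<in>fst p \<inter> fst q. snd p x \<le> snd q x" "\<forall>x\<in>fst q \<inter> fst u. snd q x \<le> snd u x"
    using assms(4,5) pqu unfolding rsu by (simp_all add: ole_Cae_class)
  then show ?thesis
    unfolding rsu using pqu
    by (intro ole_Cae_classI[where D = "fst q"]) (auto simp: cae_valid_def intro: order_trans)
qed

lemma pos_cone_Cae:
  "pos_cone (Cae T) = {cae_class T p | p. cae_valid T p \<and> (\<forall>x\<in>fst p. 0 \<le> snd p x)}"
proof (intro equalityI subsetI)
  fix C assume "C \<in> pos_cone (Cae T)"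
  then obtain p where p: "cae_valid T p" "C = cae_class T p" "ole (Cae T) \<zero>\<^bsub>Cae T\<^esub> C"
    unfolding pos_cone_def by (blast elim: Cae_carrierE)
  then have "\<forall>x\<in>fst p. 0 \<le> snd p x" by (simp add: zero_le_Cae_class)
  with p show "C \<in> {cae_class T p | p. cae_valid T p \<and> (\<forall>x\<in>fst p. 0 \<le> snd p x)}"
    by blast
next
  fix C assume "C \<in> {cae_class T p | p. cae_valid T p \<and> (\<forall>x\<in>fst p. 0 \<le> snd p x)}"
  then show "C \<in> pos_cone (Cae T)"
    unfolding pos_cone_def by (auto simp: zero_le_Cae_class cae_class_in_carrier)
qed

lemma po_cring_Cae: "po_cring (Cae T)"
  unfolding po_cring_def
proof (intro conjI ballI impI)
  show "cring (Cae T)" by (rule cring_Cae)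
next
  fix r s t assume "r \<in> carrier (Cae T)" "s \<in> carrier (Cae T)" "t \<in> carrier (Cae T)"
  then show "ole (Cae T) r s \<and> ole (Cae T) s t \<Longrightarrow> ole (Cae T) r t"
    by (blast intro: ole_Cae_trans)
next
  fix r s t assume "r \<in> carrier (Cae T)" "s \<in> carrier (Cae T)" "t \<in> carrier (Cae T)"
  then show "ole (Cae T) r s \<Longrightarrow> ole (Cae T) (r \<oplus>\<^bsub>Cae T\<^esub> t) (s \<oplus>\<^bsub>Cae T\<^esub> t)"
    by (elim Cae_carrierE) (simp add: Cae_class_simps ole_Cae_class)
next
  fix r s assume "r \<in> carrier (Cae T)" "s \<in> carrier (Cae T)"
  then show "ole (Cae T) r s \<and> ole (Cae T) s r \<Longrightarrow> r = s"
    by (elim Cae_carrierE) (auto simp: Cae_class_simps ole_Cae_class intro: order_antisym)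
next
  fix r s assume "r \<in> pos_cone (Cae T)" "s \<in> pos_cone (Cae T)"
  then obtain p q where "cae_valid T p" "\<forall>x\<in>fst p. 0 \<le> snd p x" "r = cae_class T p"
    and "cae_valid T q" "\<forall>x\<in>fst q. 0 \<le> snd q x" "s = cae_class T q"
    unfolding pos_cone_Cae by blast
  then show "r \<otimes>\<^bsub>Cae T\<^esub> s \<in> pos_cone (Cae T)"
    unfolding pos_cone_Cae
    by (intro CollectI exI[of _ "rep_mult p q"]) (simp add: mult_Cae_class cae_valid_rep_mult)
next
  fix r assume "r \<in> carrier (Cae T)"
  then obtain p where p: "cae_valid T p" "r = cae_class T p" by (rule Cae_carrierE)
  then show "ole (Cae T) r r" by (simp add: ole_Cae_class)
  show "r \<otimes>\<^bsub>Cae T\<^esub> r \<in> pos_cone (Cae T)"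
    unfolding pos_cone_Cae using p
    by (intro CollectI exI[of _ "rep_mult p p"]) (simp add: mult_Cae_class cae_valid_rep_mult)
qed

lemma add_pow_Cae_class:
  assumes p: "cae_valid T p"
  shows "add_pow (Cae T) k (cae_class T p) = cae_class T (fst p, \<lambda>x. real k * snd p x)"
proof (induction k)
  case 0
  have "cae_valid T (fst p, \<lambda>x. 0)" using cae_valid_scale[OF p, of 0] by simp
  with p show ?case by (simp add: add_pow_def Cae_class_simps)
next
  case (Suc k)
  have "add_pow (Cae T) (Suc k) (cae_class T p)
      = add_pow (Cae T) k (cae_class T p) \<oplus>\<^bsub>Cae T\<^esub> cae_class T p"
    by (simp add: add_pow_def nat_pow_def)
  also have "\<dots> = cae_class T (rep_add (fst p, \<lambda>x. real k * snd p x) p)"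
    using p by (simp add: Suc add_Cae_class cae_valid_scale)
  also have "\<dots> = cae_class T (fst p, \<lambda>x. real (Suc k) * snd p x)"
    using p cae_valid_scale[OF p, of "real (Suc k)"]
    by (subst cae_class_eq_iff) (auto simp: cae_valid_rep_add cae_valid_scale algebra_simps)
  finally show ?case .
qed

lemma nonneg_if_nat_multiples_bounded_below:
  fixes a b :: real
  assumes "\<And>k::nat. 1 \<le> k \<Longrightarrow> 0 \<le> real k * a + b"
  shows "0 \<le> a"
proof (rule ccontr)
  assume "\<not> 0 \<le> a"
  then obtain k :: nat where k: "\<bar>b\<bar> < real k * - a"
    using ex_less_of_nat_mult[of "- a" "\<bar>b\<bar>"] by auto
  then have "1 \<le> k" by (cases k) auto
  with k assms[of k] show False by simp
qed

lemma archimedean_po_Cae: "archimedean_po (Cae T)"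
  unfolding archimedean_po_def
proof (intro ballI impI)
  fix g h assume g: "g \<in> carrier (Cae T)" and h: "h \<in> carrier (Cae T)"
    and multiples: "\<forall>k::nat. 1 \<le> k \<longrightarrow> add_pow (Cae T) k g \<oplus>\<^bsub>Cae T\<^esub> h \<in> pos_cone (Cae T)"
  obtain a b where a: "cae_valid T a" "g = cae_class T a" and b: "cae_valid T b" "h = cae_class T b"
    using g h by (meson Cae_carrierE)
  have "0 \<le> real k * snd a x + snd b x" if "1 \<le> k" "x \<in> fst a \<inter> fst b" for k x
  proof -
    have "ole (Cae T) \<zero>\<^bsub>Cae T\<^esub> (cae_class T (rep_add (fst a, \<lambda>x. real k * snd a x) b))"
      using multiples that(1) a b
      by (simp add: pos_cone_def add_pow_Cae_class add_Cae_class cae_valid_scale)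
    then show ?thesis
      using that(2) a b by (simp add: zero_le_Cae_class cae_valid_rep_add cae_valid_scale)
  qed
  then have "\<forall>x\<in>fst a \<inter> fst b. 0 \<le> snd a x"
    using nonneg_if_nat_multiples_bounded_below by blast
  then have "ole (Cae T) \<zero>\<^bsub>Cae T\<^esub> g"
    unfolding a(2) using b(1)
    by (intro zero_le_Cae_classI[OF a(1), where D = "fst b"]) (auto simp: cae_valid_def)
  then show "g \<in> pos_cone (Cae T)" using g by (simp add: pos_cone_def)
qed

lemma strongly_localizable_Cae: "strongly_localizable (Cae T)"
  unfolding strongly_localizable_iff
proof (intro conjI ballI impI)
  fix r assume "r \<in> carrier (Cae T)"
  then show "r \<otimes>\<^bsub>Cae T\<^esub> r \<in> pos_cone (Cae T)"
    using po_cring_Cae[of T] by (simp add: po_cring_def)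
next
  fix s r assume s: "s \<in> pos_cone (Cae T)" and r: "r \<in> carrier (Cae T)"
    and pos: "r \<otimes>\<^bsub>Cae T\<^esub> (\<one>\<^bsub>Cae T\<^esub> \<oplus>\<^bsub>Cae T\<^esub> s) \<in> pos_cone (Cae T)"
  obtain p where p: "cae_valid T p" "s = cae_class T p" "\<forall>x\<in>fst p. 0 \<le> snd p x"
    using s unfolding pos_cone_Cae by blast
  obtain q where q: "cae_valid T q" "r = cae_class T q"
    using r by (rule Cae_carrierE)
  have prod: "\<forall>x\<in>fst q \<inter> (topspace T \<inter> fst p). 0 \<le> snd q x * (1 + snd p x)"
    using pos p q
    by (simp add: pos_cone_def one_Cae add_Cae_class mult_Cae_class cae_valid_const
        cae_valid_rep_add cae_valid_rep_mult zero_le_Cae_class)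
  have "0 \<le> snd q x" if "x \<in> fst q \<inter> fst p" for x
  proof -
    have "0 \<le> snd q x * (1 + snd p x)" "0 < 1 + snd p x"
      using that prod p(3) cae_valid_subset[OF p(1)] by force+
    then show ?thesis by (simp add: zero_le_mult_iff)
  qed
  then have "ole (Cae T) \<zero>\<^bsub>Cae T\<^esub> r"
    unfolding q(2) using p(1)
    by (intro zero_le_Cae_classI[OF q(1), where D = "fst p"]) (auto simp: cae_valid_def)
  then show "r \<in> pos_cone (Cae T)" using r by (simp add: pos_cone_def)
qed

theorem proposition15:
  fixes T :: "'a topology"
  assumes "compact_space T" and "Hausdorff_space T"
  shows "po_cring (Cae T) \<and> archimedean_po (Cae T) \<and> strongly_localizable (Cae T)
    \<and> (\<forall>S. subring S (Cae T) \<longrightarrow>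
          (let R = (Cae T)\<lparr>carrier := S\<rparr> in
             po_cring R \<and> archimedean_po R \<and> strongly_localizable R))"
proof -
  have Cae: "po_cring (Cae T)" "archimedean_po (Cae T)" "strongly_localizable (Cae T)"
    by (rule po_cring_Cae archimedean_po_Cae strongly_localizable_Cae)+
  have "po_cring R \<and> archimedean_po R \<and> strongly_localizable R"
    if "subring S (Cae T)" "R = (Cae T)\<lparr>carrier := S\<rparr>" for S R
    using that Cae po_cring_subring archimedean_po_subring[OF _ subringE(1)]
      strongly_localizable_subring
    by blast
  with Cae show ?thesis by (simp add: Let_def)
qed

end
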